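(* For every $\varphi\in\mathcal{L}_{AIL}$, the closure $cl(\varphi)$ is finite.
   Context: $\mathcal{L}_{AIL}$ over a countable set $\mathcal{P}$ of atoms and finite set $\mathcal{G}$ of agents: $\varphi::=p\mid\neg\varphi\mid\varphi\wedge\varphi\mid A_i\varphi\mid I_i\varphi\mid E_i\varphi\mid[\approx]_i\varphi\mid[\circ^+]_i\varphi$. $cl(\varphi)$ is the smallest set such that: (1) $\varphi\in cl(\varphi)$; (2) if $\psi\in cl(\varphi)$ then all subformulas of $\psi$ are in $cl(\varphi)$; (3) if $\psi\in cl(\varphi)$ and $\psi$ is not a negation, then $\neg\psi\in cl(\varphi)$; (4) if $A_i\psi\in cl(\varphi)$ then $A_i\chi\in cl(\varphi)$ for every subformula $\chi$ of $\psi$; (5) if $A_i\psi\in cl(\varphi)$ then $I_iA_i\psi$, $I_i\neg A_i\psi$, and $[\approx]_ip$ are in $cl(\varphi)$ for every atom $p$ that is a subformula of $\psi$; (6) if $I_i\psi\in cl(\varphi)$ and $\psi$ is of neither the form $I_i\chi$ nor $\neg I_i\chi$, then $I_iI_i\psi,I_i\neg I_i\psi\in cl(\varphi)$; (7) if $[\approx]_i\psi\in cl(\varphi)$ and $\psi$ is of neither the form $[\approx]_i\chi$ nor $\neg[\approx]_i\chi$, then $[\approx]_i[\approx]_i\psi,[\approx]_i\neg[\approx]_i\psi\in cl(\varphi)$; (8) if $[\circ^+]_i\psi\in cl(\varphi)$ then $[\approx]_iI_i[\circ^+]_i\psi\in cl(\varphi)$; (9) if $E_i\psi\in cl(\varphi)$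 then $A_i\psi,[\circ^+]_i\psi\in cl(\varphi)$. *)

theory Defs
  imports Main
begin

datatype ('p, 'g) fm =
    Atom 'p
  | Neg "('p, 'g) fm"
  | Conj "('p, 'g) fm" "('p, 'g) fm"
  | Aw 'g "('p, 'g) fm"
  | Imp 'g "('p, 'g) fm"
  | Ex 'g "('p, 'g) fm"
  | Sim 'g "('p, 'g) fm"     (* [\<approx>]_i *)
  | Circ 'g "('p, 'g) fm"    (* [\<circ>^+]_i *)

fun subformulas :: "('p, 'g) fm \<Rightarrow> ('p, 'g) fm set" where
  "subformulas (Atom p) = {Atom p}"
| "subformulas (Neg a) = insert (Neg a) (subformulas a)"
| "subformulas (Conj a b) = insert (Conj a b) (subformulas a \<union> subformulas b)"
| "subformulas (Aw i a) = insert (Aw i a) (subformulas a)"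
| "subformulas (Imp i a) = insert (Imp i a) (subformulas a)"
| "subformulas (Ex i a) = insert (Ex i a) (subformulas a)"
| "subformulas (Sim i a) = insert (Sim i a) (subformulas a)"
| "subformulas (Circ i a) = insert (Circ i a) (subformulas a)"

fun is_neg :: "('p, 'g) fm \<Rightarrow> bool" where
  "is_neg (Neg _) = True"
| "is_neg _ = False"

inductive_set cl :: "('p, 'g) fm \<Rightarrow> ('p, 'g) fm set" for \<phi> :: "('p, 'g) fm" where
  c1: "\<phi> \<in> cl \<phi>"
| c2: "\<psi> \<in> cl \<phi> \<Longrightarrow> \<chi> \<in> subformulas \<psi> \<Longrightarrow> \<chi> \<in> cl \<phi>"
| c3: "\<psi> \<in> cl \<phi> \<Longrightarrow> \<not> is_neg \<psi> \<Longrightarrow> Neg \<psi> \<in> cl \<phi>"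
| c4: "Aw i \<psi> \<in> cl \<phi> \<Longrightarrow> \<chi> \<in> subformulas \<psi> \<Longrightarrow> Aw i \<chi> \<in> cl \<phi>"
| c5a: "Aw i \<psi> \<in> cl \<phi> \<Longrightarrow> Imp i (Aw i \<psi>) \<in> cl \<phi>"
| c5b: "Aw i \<psi> \<in> cl \<phi> \<Longrightarrow> Imp i (Neg (Aw i \<psi>)) \<in> cl \<phi>"
| c5c: "Aw i \<psi> \<in> cl \<phi> \<Longrightarrow> Atom p \<in> subformulas \<psi> \<Longrightarrow> Sim i (Atom p) \<in> cl \<phi>"
| c6a: "Imp i \<psi> \<in> cl \<phi> \<Longrightarrow> (\<nexists>\<chi>. \<psi> = Imp i \<chi> \<or> \<psi> = Neg (Imp i \<chi>)) \<Longrightarrow> Imp i (Imp i \<psi>) \<in> cl \<phi>"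
| c6b: "Imp i \<psi> \<in> cl \<phi> \<Longrightarrow> (\<nexists>\<chi>. \<psi> = Imp i \<chi> \<or> \<psi> = Neg (Imp i \<chi>)) \<Longrightarrow> Imp i (Neg (Imp i \<psi>)) \<in> cl \<phi>"
| c7a: "Sim i \<psi> \<in> cl \<phi> \<Longrightarrow> (\<nexists>\<chi>. \<psi> = Sim i \<chi> \<or> \<psi> = Neg (Sim i \<chi>)) \<Longrightarrow> Sim i (Sim i \<psi>) \<in> cl \<phi>"
| c7b: "Sim i \<psi> \<in> cl \<phi> \<Longrightarrow> (\<nexists>\<chi>. \<psi> = Sim i \<chi> \<or> \<psi> = Neg (Sim i \<chi>)) \<Longrightarrow> Sim i (Neg (Sim i \<psi>)) \<in> cl \<phi>"
| c8: "Circ i \<psi> \<in> cl \<phi> \<Longrightarrow> Sim i (Imp i (Circ i \<psi>)) \<in> cl \<phi>"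
| c9a: "Ex i \<psi> \<in> cl \<phi> \<Longrightarrow> Aw i \<psi> \<in> cl \<phi>"
| c9b: "Ex i \<psi> \<in> cl \<phi> \<Longrightarrow> Circ i \<psi> \<in> cl \<phi>"

end

theory Submission
  imports Defs
begin

text \<open>Apart from taking subformulas and adding a single negation, every clause of \<open>cl\<close>
  wraps a formula in at most two modalities of a fixed shape, and the side conditions of
  clauses 6 and 7 stop those from being iterated.  Hence \<open>cl \<phi>\<close> lies in the finite set
  obtained from the subformulas of \<open>\<phi>\<close> by applying one-step expansions for clauses 9, 4,
  5 and 8, 6 and 7, and 3 once each, in this order.  Only agents occurring in \<open>\<phi>\<close> are
  involved.\<close>

lemma subformulas_self: "\<psi> \<in> subformulas \<psi>"
  by (cases \<psi>) auto

lemma subformulas_trans: "\<chi> \<in> subformulas \<psi> \<Longrightarrow> subformulas \<chi> \<subseteq> subformulas \<psi>"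
  by (induction \<psi>) auto

lemma finite_subformulas: "finite (subformulas \<psi>)"
  by (induction \<psi>) auto

definition sub_closed :: "('p, 'g) fm set \<Rightarrow> bool" where
  "sub_closed S \<longleftrightarrow> (\<forall>\<psi>\<in>S. subformulas \<psi> \<subseteq> S)"

definition extend :: "('a \<Rightarrow> 'a set) \<Rightarrow> 'a set \<Rightarrow> 'a set" where
  "extend f S = S \<union> \<Union> (f ` S)"

lemma subset_extend: "S \<subseteq> extend f S"
  unfolding extend_def by blast

lemma step_subset_extend: "\<psi> \<in> S \<Longrightarrow> f \<psi> \<subseteq> extend f S"
  unfolding extend_def by blast

lemma finite_extend: "finite S \<Longrightarrow> (\<And>\<psi>. finite (f \<psi>)) \<Longrightarrow> finite (extend f S)"
  unfolding extend_def by simp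

lemma extend_not_step: "x \<in> extend f S \<Longrightarrow> (\<And>\<psi>. x \<notin> f \<psi>) \<Longrightarrow> x \<in> S"
  unfolding extend_def by blast

lemma step_subset_extend_trans:
  assumes "x \<in> extend f S" and "\<And>y \<psi>. y \<in> f \<psi> \<Longrightarrow> f y \<subseteq> f \<psi>"
  shows "f x \<subseteq> extend f S"
  using assms unfolding extend_def by auto

lemma sub_closed_extend:
  assumes S: "sub_closed S"
    and f: "\<And>\<psi> x. x \<in> f \<psi> \<Longrightarrow> subformulas x \<subseteq> subformulas \<psi> \<union> f \<psi>"
  shows "sub_closed (extend f S)"
  unfolding sub_closed_def
proof
  fix x assume "x \<in> extend f S"
  then consider "x \<in> S" | \<psi> where "\<psi> \<in> S" "x \<in> f \<psi>"
    unfolding extend_def by blast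
  then show "subformulas x \<subseteq> extend f S"
  proof cases
    case 1
    then show ?thesis using S subset_extend[of S f] unfolding sub_closed_def by blast
  next
    case 2
    then have "subformulas \<psi> \<subseteq> S" using S unfolding sub_closed_def by blast
    then have "subformulas x \<subseteq> S \<union> f \<psi>" using f[OF 2(2)] by blast
    also have "\<dots> \<subseteq> extend f S" using 2(1) unfolding extend_def by blast
    finally show ?thesis .
  qed
qed

text \<open>Expansions for clauses 9, 4, 5 and 8, and 6 and 7.  The extra negations and
  \<open>I\<^sub>i[\<circ>\<^sup>+]\<^sub>i\<psi>\<close> keep the layers closed under subformulas.\<close>

fun E_step :: "('p, 'g) fm \<Rightarrow> ('p, 'g) fm set" where
  "E_step (Ex i \<psi>) = {Aw i \<psi>, Circ i \<psi>}"
| "E_step _ = {}"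

fun A_step :: "('p, 'g) fm \<Rightarrow> ('p, 'g) fm set" where
  "A_step (Aw i \<psi>) = Aw i ` subformulas \<psi>"
| "A_step _ = {}"

fun AC_step :: "('p, 'g) fm \<Rightarrow> ('p, 'g) fm set" where
  "AC_step (Aw i \<psi>) = {Imp i (Aw i \<psi>), Imp i (Neg (Aw i \<psi>)), Neg (Aw i \<psi>)}
      \<union> Sim i ` (subformulas \<psi> \<inter> range Atom)"
| "AC_step (Circ i \<psi>) = {Sim i (Imp i (Circ i \<psi>)), Imp i (Circ i \<psi>)}"
| "AC_step _ = {}"

fun IS_step :: "('p, 'g) fm \<Rightarrow> ('p, 'g) fm set" where
  "IS_step (Imp i \<psi>) = {Imp i (Imp i \<psi>), Imp i (Neg (Imp i \<psi>)), Neg (Imp i \<psi>)}"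
| "IS_step (Sim i \<psi>) = {Sim i (Sim i \<psi>), Sim i (Neg (Sim i \<psi>)), Neg (Sim i \<psi>)}"
| "IS_step _ = {}"

lemma subformulas_steps:
  "x \<in> E_step \<psi> \<Longrightarrow> subformulas x \<subseteq> subformulas \<psi> \<union> E_step \<psi>"
  "x \<in> A_step \<psi> \<Longrightarrow> subformulas x \<subseteq> subformulas \<psi> \<union> A_step \<psi>"
  "x \<in> AC_step \<psi> \<Longrightarrow> subformulas x \<subseteq> subformulas \<psi> \<union> AC_step \<psi>"
  "x \<in> IS_step \<psi> \<Longrightarrow> subformulas x \<subseteq> subformulas \<psi> \<union> IS_step \<psi>"
  by (cases \<psi>; auto simp: subformulas_self dest: subformulas_trans)+

lemma Imp_notin_IS_step:
  "\<nexists>\<chi>. \<psi> = Imp i \<chi> \<or> \<psi> = Neg (Imp i \<chi>) \<Longrightarrow> Imp i \<psi> \<notin> IS_step x"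
  by (cases x) auto

lemma Sim_notin_IS_step:
  "\<nexists>\<chi>. \<psi> = Sim i \<chi> \<or> \<psi> = Neg (Sim i \<chi>) \<Longrightarrow> Sim i \<psi> \<notin> IS_step x"
  by (cases x) auto

lemma finite_steps:
  "finite (E_step \<psi>)" "finite (A_step \<psi>)" "finite (AC_step \<psi>)" "finite (IS_step \<psi>)"
  by (cases \<psi>; simp add: finite_subformulas)+

definition A_layer :: "('p, 'g) fm \<Rightarrow> ('p, 'g) fm set" where
  "A_layer \<phi> = extend A_step (extend E_step (subformulas \<phi>))"

definition I_layer :: "('p, 'g) fm \<Rightarrow> ('p, 'g) fm set" where
  "I_layer \<phi> = extend AC_step (A_layer \<phi>)"

definition cl_bound :: "('p, 'g) fm \<Rightarrow> ('p, 'g) fm set" where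
  "cl_bound \<phi> = extend (\<lambda>\<psi>. {Neg \<psi>}) (extend IS_step (I_layer \<phi>))"

lemma finite_cl_bound: "finite (cl_bound \<phi>)"
  unfolding cl_bound_def I_layer_def A_layer_def
  by (intro finite_extend finite_subformulas finite_steps) simp

lemma sub_closed_cl_bound: "sub_closed (cl_bound \<phi>)"
proof -
  have "sub_closed (subformulas \<phi>)"
    unfolding sub_closed_def using subformulas_trans by blast
  then show ?thesis
    unfolding cl_bound_def I_layer_def A_layer_def
    by (intro sub_closed_extend subformulas_steps) (auto simp: subformulas_self)
qed

lemma layers_subset:
  "subformulas \<phi> \<subseteq> A_layer \<phi>" "A_layer \<phi> \<subseteq> cl_bound \<phi>" "I_layer \<phi> \<subseteq> cl_bound \<phi>"
  unfolding cl_bound_def I_layer_def A_layer_def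
  by (meson subset_extend subset_trans)+

lemma I_layer_if_in_cl_bound:
  assumes "x \<in> cl_bound \<phi>" and "\<not> is_neg x" and "\<And>\<chi>. x \<notin> IS_step \<chi>"
  shows "x \<in> I_layer \<phi>"
proof -
  have "x \<in> extend IS_step (I_layer \<phi>)"
    using assms(1) unfolding cl_bound_def by (rule extend_not_step) (use assms(2) in auto)
  then show ?thesis using assms(3) by (rule extend_not_step)
qed

lemma A_layer_if_in_cl_bound:
  assumes "x \<in> cl_bound \<phi>" and "x \<in> {Aw i \<psi>, Circ i \<psi>, Ex i \<psi>}"
  shows "x \<in> A_layer \<phi>"
proof -
  have "x \<notin> IS_step \<chi>" "x \<notin> AC_step \<chi>" for \<chi>
    using assms(2) by (cases \<chi>; auto)+
  then have "x \<in> I_layer \<phi>" using assms by (intro I_layer_if_in_cl_bound) auto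
  then show ?thesis unfolding I_layer_def by (rule extend_not_step) fact
qed

lemma subformula_if_Ex_in_A_layer: "Ex i \<psi> \<in> A_layer \<phi> \<Longrightarrow> Ex i \<psi> \<in> subformulas \<phi>"
proof -
  have "Ex i \<psi> \<notin> A_step \<chi>" "Ex i \<psi> \<notin> E_step \<chi>" for \<chi>
    by (cases \<chi>; auto)+
  then show "Ex i \<psi> \<in> A_layer \<phi> \<Longrightarrow> ?thesis"
    unfolding A_layer_def by (meson extend_not_step)
qed

lemma A_step_trans: "x \<in> A_step \<psi> \<Longrightarrow> A_step x \<subseteq> A_step \<psi>"
  by (cases \<psi>) (auto simp: image_iff, meson subformulas_trans subsetD)

lemma E_step_subset_cl_bound: "Ex i \<psi> \<in> cl_bound \<phi> \<Longrightarrow> E_step (Ex i \<psi>) \<subseteq> cl_bound \<phi>"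
proof -
  assume "Ex i \<psi> \<in> cl_bound \<phi>"
  then have "Ex i \<psi> \<in> A_layer \<phi>" by (rule A_layer_if_in_cl_bound) simp
  then have "E_step (Ex i \<psi>) \<subseteq> extend E_step (subformulas \<phi>)"
    by (intro step_subset_extend subformula_if_Ex_in_A_layer)
  also have "\<dots> \<subseteq> A_layer \<phi>" unfolding A_layer_def by (rule subset_extend)
  also have "\<dots> \<subseteq> cl_bound \<phi>" by (rule layers_subset)
  finally show ?thesis .
qed

lemma A_step_subset_cl_bound: "Aw i \<psi> \<in> cl_bound \<phi> \<Longrightarrow> A_step (Aw i \<psi>) \<subseteq> cl_bound \<phi>"
proof -
  assume "Aw i \<psi> \<in> cl_bound \<phi>"
  then have "Aw i \<psi> \<in> A_layer \<phi>" by (rule A_layer_if_in_cl_bound) simp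
  then have "A_step (Aw i \<psi>) \<subseteq> A_layer \<phi>"
    unfolding A_layer_def using A_step_trans by (rule step_subset_extend_trans)
  also have "\<dots> \<subseteq> cl_bound \<phi>" by (rule layers_subset)
  finally show ?thesis .
qed

lemma AC_step_subset_cl_bound:
  "x \<in> cl_bound \<phi> \<Longrightarrow> x \<in> {Aw i \<psi>, Circ i \<psi>} \<Longrightarrow> AC_step x \<subseteq> cl_bound \<phi>"
proof -
  assume "x \<in> cl_bound \<phi>" and "x \<in> {Aw i \<psi>, Circ i \<psi>}"
  then have "x \<in> A_layer \<phi>" by (auto intro: A_layer_if_in_cl_bound)
  then have "AC_step x \<subseteq> I_layer \<phi>" unfolding I_layer_def by (rule step_subset_extend)
  also have "\<dots> \<subseteq> cl_bound \<phi>" by (rule layers_subset)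
  finally show ?thesis .
qed

lemma IS_step_subset_cl_bound:
  "x \<in> cl_bound \<phi> \<Longrightarrow> \<not> is_neg x \<Longrightarrow> (\<And>\<chi>. x \<notin> IS_step \<chi>) \<Longrightarrow> IS_step x \<subseteq> cl_bound \<phi>"
proof -
  assume "x \<in> cl_bound \<phi>" "\<not> is_neg x" "\<And>\<chi>. x \<notin> IS_step \<chi>"
  then have "x \<in> I_layer \<phi>" by (rule I_layer_if_in_cl_bound)
  then have "IS_step x \<subseteq> extend IS_step (I_layer \<phi>)" by (rule step_subset_extend)
  also have "\<dots> \<subseteq> cl_bound \<phi>" unfolding cl_bound_def by (rule subset_extend)
  finally show ?thesis .
qed

lemma Neg_in_cl_bound:
  assumes "\<psi> \<in> cl_bound \<phi>" and "\<not> is_neg \<psi>"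
  shows "Neg \<psi> \<in> cl_bound \<phi>"
proof -
  have "\<psi> \<in> extend IS_step (I_layer \<phi>)"
    using assms(1) unfolding cl_bound_def by (rule extend_not_step) (use assms(2) in auto)
  then show ?thesis unfolding cl_bound_def extend_def by blast
qed

lemma cl_subset_cl_bound: "cl \<phi> \<subseteq> cl_bound \<phi>"
proof
  fix x assume "x \<in> cl \<phi>"
  then show "x \<in> cl_bound \<phi>"
  proof (induction rule: cl.induct)
    case c1
    then show ?case using layers_subset subformulas_self by blast
  next
    case (c2 \<psi> \<chi>)
    then show ?case using sub_closed_cl_bound unfolding sub_closed_def by blast
  next
    case (c3 \<psi>)
    show ?case using c3.IH c3.hyps(2) by (rule Neg_in_cl_bound)
  next
    case (c4 i \<psi> \<chi>)
    then show ?case using A_step_subset_cl_bound[of i \<psi>] by auto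
  next
    case (c5a i \<psi>)
    show ?case using AC_step_subset_cl_bound[OF c5a.IH] by auto
  next
    case (c5b i \<psi>)
    show ?case using AC_step_subset_cl_bound[OF c5b.IH] by auto
  next
    case (c5c i \<psi> p)
    then have "Sim i (Atom p) \<in> AC_step (Aw i \<psi>)" by auto
    then show ?case using AC_step_subset_cl_bound[OF c5c.IH] by auto
  next
    case (c6a i \<psi>)
    show ?case
      using IS_step_subset_cl_bound[OF c6a.IH _ Imp_notin_IS_step[OF c6a.hyps(2)]] by auto
  next
    case (c6b i \<psi>)
    show ?case
      using IS_step_subset_cl_bound[OF c6b.IH _ Imp_notin_IS_step[OF c6b.hyps(2)]] by auto
  next
    case (c7a i \<psi>)
    show ?case
      using IS_step_subset_cl_bound[OF c7a.IH _ Sim_notin_IS_step[OF c7a.hyps(2)]] by auto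
  next
    case (c7b i \<psi>)
    show ?case
      using IS_step_subset_cl_bound[OF c7b.IH _ Sim_notin_IS_step[OF c7b.hyps(2)]] by auto
  next
    case (c8 i \<psi>)
    show ?case using AC_step_subset_cl_bound[OF c8.IH] by auto
  next
    case (c9a i \<psi>)
    then show ?case using E_step_subset_cl_bound[of i \<psi>] by auto
  next
    case (c9b i \<psi>)
    then show ?case using E_step_subset_cl_bound[of i \<psi>] by auto
  qed
qed

theorem lemma5:
  fixes \<phi> :: "('p, 'g::finite) fm"
  shows "finite (cl \<phi>)"
  using finite_cl_bound cl_subset_cl_bound by (rule finite_subset[rotated])

end
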